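(* In the single-component setting, suppose $\sigma\le\frac{4\sqrt2}{\sqrt\pi}$ and $\gamma^\star_\sigma\le\min\{1,\frac1{4\sqrt\rho}\}$, where $\gamma^\star_\sigma=\sigma^2+\sigma\sqrt{2\log\frac{4\sqrt2}{\sqrt\pi\sigma}}$. Then $\frac{\partial}{\partial\sigma}L(w)\ge p(0)\Big(\frac{\sigma}{11}\int_0^\infty\exp\big((|s(0)|-\frac{\sqrt\rho}4-1)\delta-\frac\rho2\delta^2\big)d\delta-2\sqrt2\exp\big(\frac{s(0)^2}{\nu+\sigma^{-2}}\big)\frac1{\sqrt{\nu+\sigma^{-2}}}\Big)$.
   Context: Single-component setting: $y$ uniform on $\{\pm1\}$; $x=(x_1,x_2)$, $x_1\in\mathbb{R}^{d_1}$, $x_2\sim\mathcal{N}(0,\Sigma_2)$ with $\Sigma_2\succ0$ independent of $x_1$. $\ell_{exp}(t)=\exp(-|t|)$, $L(w)=\mathbb{E}[\ell_{exp}(w^\top x)]$. For fixed $w=(w_1,w_2)$: $\sigma=\sqrt{w_2^\top\Sigma_2w_2}$; $p$ is the density of $\mu=w_1^\top x_1$, assumed such that $\log p$ is differentiable, $\nu$-strongly concave and $\rho$-smooth (i.e. $-\rho\le(\log p)''\le-\nu$) for some $0<\nu\le\rho$; $s(\mu)=\frac{p'(\mu)}{p(\mu)}$. $L(w)=\mathbb{E}_\mu[g_\sigma(\mu)]$ with $g_\sigma(\mu)=\mathbb{E}_{Z\sim\mathcal{N}(0,1)}[\ell_{exp}(\mu+\sigma Z)]$, and $\frac{\partial}{\partial\sigma}L(w)=\mathbb{E}_\mu[\frac{\partial}{\partial\sigma}g_\sigma(\mu)]$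 denotes the derivative with respect to $\sigma$ with the law of $\mu$ held fixed. *)

theory Defs
  imports "HOL-Probability.Probability"
begin

definition ell_exp :: "real \<Rightarrow> real" where
  "ell_exp t = exp (- \<bar>t\<bar>)"

definition g_smooth :: "real \<Rightarrow> real \<Rightarrow> real" where
  "g_smooth \<sigma> \<mu> = (LINT z|lborel. std_normal_density z * ell_exp (\<mu> + \<sigma> * z))"

text \<open>L as a function of sigma with the law of mu (density p) held fixed:
  L = E_mu[g_sigma(mu)].\<close>
definition L_sigma :: "(real \<Rightarrow> real) \<Rightarrow> real \<Rightarrow> real" where
  "L_sigma p \<sigma> = (LINT m|lborel. p m * g_smooth \<sigma> m)"

definition score :: "(real \<Rightarrow> real) \<Rightarrow> real \<Rightarrow> real" where
  "score p x = deriv p x / p x"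

definition gamma_star :: "real \<Rightarrow> real" where
  "gamma_star \<sigma> = \<sigma>\<^sup>2 + \<sigma> * sqrt (2 * ln (4 * sqrt 2 / (sqrt pi * \<sigma>)))"

end

theory Submission
  imports Defs "HOL-Real_Asymp.Real_Asymp"
begin

text \<open>
  Differentiating under both integrals and integrating by parts in the Gaussian variable gives
  \<open>dL/d\<sigma> = \<sigma> L(\<sigma>) - 2 E[\<phi>(\<mu>/\<sigma>)]\<close>, where the second term is produced by the kink
  of the loss at \<open>0\<close>. The two-sided bound on the derivative of the score sandwiches \<open>p\<close>
  between the Gaussian envelopes \<open>p(0) exp(s(0) \<mu> - \<rho> \<mu>\<^sup>2/2)\<close> and
  \<open>p(0) exp(s(0) \<mu> - \<nu> \<mu>\<^sup>2/2)\<close>. For \<open>\<sigma> \<le> 1\<close> the smoothed loss is at least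
  \<open>exp(-1 - |\<mu>|)\<close>; integrating this against the lower envelope on the half-line where
  \<open>s(0) \<mu> \<ge> 0\<close> bounds \<open>L(\<sigma>)\<close> from below, while the upper envelope turns
  \<open>E[\<phi>(\<mu>/\<sigma>)]\<close> into an explicit Gaussian integral.
\<close>

lemma integrable_mult_bounded:
  fixes f g :: "'a \<Rightarrow> real"
  assumes "integrable M f" "g \<in> borel_measurable M" "\<And>x. \<bar>g x\<bar> \<le> C"
  shows "integrable M (\<lambda>x. f x * g x)"
proof (rule Bochner_Integration.integrable_bound)
  show "integrable M (\<lambda>x. C * f x)"
    using assms(1) by simp
  show "AE x in M. norm (f x * g x) \<le> norm (C * f x)"
  proof (rule AE_I2)
    fix x
    have "\<bar>f x\<bar> * \<bar>g x\<bar> \<le> \<bar>f x\<bar> * \<bar>C\<bar>"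
      using assms(3)[of x] by (intro mult_left_mono) auto
    then show "norm (f x * g x) \<le> norm (C * f x)"
      by (simp add: abs_mult mult.commute)
  qed
qed (use assms in measurable)

lemma has_real_derivative_integral_lipschitz:
  fixes f :: "real \<Rightarrow> 'a \<Rightarrow> real"
  assumes meas: "\<And>s. f s \<in> borel_measurable M" and f'_meas: "f' \<in> borel_measurable M"
    and int_x: "integrable M (f x)" and int_w: "integrable M w"
    and deriv: "AE y in M. ((\<lambda>s. f s y) has_real_derivative f' y) (at x)"
    and lip: "\<And>s y. y \<in> space M \<Longrightarrow> \<bar>f s y - f x y\<bar> \<le> \<bar>s - x\<bar> * w y"
  shows "((\<lambda>s. LINT y|M. f s y) has_real_derivative (LINT y|M. f' y)) (at x)"
proof -
  have w_nonneg: "0 \<le> w y" if "y \<in> space M" for y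
    using lip[OF that, of "x + 1"] abs_ge_zero[of "f (x + 1) y - f x y"] by simp
  have int_s: "integrable M (f s)" for s
  proof (rule Bochner_Integration.integrable_bound)
    show "integrable M (\<lambda>y. \<bar>f x y\<bar> + \<bar>s - x\<bar> * w y)"
      using int_x int_w by auto
    show "AE y in M. norm (f s y) \<le> norm (\<bar>f x y\<bar> + \<bar>s - x\<bar> * w y)"
    proof (rule AE_I2)
      fix y assume "y \<in> space M"
      with lip[of y s] w_nonneg[of y] show "norm (f s y) \<le> norm (\<bar>f x y\<bar> + \<bar>s - x\<bar> * w y)"
        by simp
    qed
  qed (use meas in auto)
  show ?thesis
    unfolding DERIV_def tendsto_at_iff_sequentially comp_def
  proof (intro allI impI)
    fix X :: "nat \<Rightarrow> real"
    assume X: "\<forall>i. X i \<in> UNIV - {0}" "X \<longlonglongrightarrow> 0"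
    then have X_at: "filterlim X (at 0) sequentially"
      by (auto simp: filterlim_at)
    have quot: "((LINT y|M. f (x + X i) y) - (LINT y|M. f x y)) / X i
        = (LINT y|M. (f (x + X i) y - f x y) / X i)" for i
      using int_s by simp
    show "(\<lambda>i. ((LINT y|M. f (x + X i) y) - (LINT y|M. f x y)) / X i) \<longlonglongrightarrow> (LINT y|M. f' y)"
      unfolding quot
    proof (rule integral_dominated_convergence[where w=w])
      show "AE y in M. (\<lambda>i. (f (x + X i) y - f x y) / X i) \<longlonglongrightarrow> f' y"
        using deriv
      proof eventually_elim
        case (elim y)
        then have "((\<lambda>h. (f (x + h) y - f x y) / h) \<longlongrightarrow> f' y) (at 0)"
          by (simp add: DERIV_def)
        from filterlim_compose[OF this X_at] show ?case .
      qed
      show "AE y in M. norm ((f (x + X i) y - f x y) / X i) \<le> w y" for i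
        using lip[of _ "x + X i"] X(1) by (intro AE_I2) (simp add: divide_le_eq mult.commute)
    qed (use meas f'_meas int_w in auto)
  qed
qed

lemma integral_by_one_sided_antiderivatives:
  fixes h f g F G :: "real \<Rightarrow> real"
  assumes h: "integrable lborel h"
    and left: "\<And>x. x < c \<Longrightarrow> h x = f x" and right: "\<And>x. c < x \<Longrightarrow> h x = g x"
    and F: "\<And>x. (F has_real_derivative f x) (at x)" and G: "\<And>x. (G has_real_derivative g x) (at x)"
    and f: "continuous_on UNIV f" and g: "continuous_on UNIV g"
    and F_bot: "(F \<longlongrightarrow> 0) at_bot" and G_top: "(G \<longlongrightarrow> 0) at_top"
  shows "(LINT x|lborel. h x) = F c - G c"
proof -
  have h_on: "set_integrable lborel (einterval a b) h" for a b
    unfolding set_integrable_def by (rule integrable_mult_indicator) (simp_all add: h)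
  have "(LBINT x=-\<infinity>..ereal c. h x) = (LBINT x=-\<infinity>..ereal c. f x)"
    by (rule interval_integral_cong) (simp add: left)
  also have "\<dots> = F c - 0"
  proof (rule interval_integral_FTC_integrable)
    show "set_integrable lborel (einterval (-\<infinity>) (ereal c)) f"
      using h_on[of "-\<infinity>" c] unfolding set_integrable_def
      by (rule Bochner_Integration.integrable_cong[THEN iffD1, rotated 2])
         (auto simp: left split: split_indicator)
    show "((F \<circ> real_of_ereal) \<longlongrightarrow> 0) (at_right (-\<infinity>))"
      using F_bot by (simp add: ereal_tendsto_simps)
    have "(F \<longlongrightarrow> F c) (at_left c)"
      using DERIV_isCont[OF F] by (simp add: isCont_def filterlim_at_split)
    then show "((F \<circ> real_of_ereal) \<longlongrightarrow> F c) (at_left (ereal c))"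
      by (simp add: ereal_tendsto_simps)
  qed (use F f in \<open>auto simp: has_real_derivative_iff_has_vector_derivative continuous_on_eq_continuous_at\<close>)
  finally have I_left: "(LBINT x=-\<infinity>..ereal c. h x) = F c" by simp
  have "(LBINT x=ereal c..\<infinity>. h x) = (LBINT x=ereal c..\<infinity>. g x)"
    by (rule interval_integral_cong) (simp add: right)
  also have "\<dots> = 0 - G c"
  proof (rule interval_integral_FTC_integrable)
    show "set_integrable lborel (einterval (ereal c) \<infinity>) g"
      using h_on[of c "\<infinity>"] unfolding set_integrable_def
      by (rule Bochner_Integration.integrable_cong[THEN iffD1, rotated 2])
         (auto simp: right split: split_indicator)
    show "((G \<circ> real_of_ereal) \<longlongrightarrow> 0) (at_left \<infinity>)"
      using G_top by (simp add: ereal_tendsto_simps)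
    have "(G \<longlongrightarrow> G c) (at_right c)"
      using DERIV_isCont[OF G] by (simp add: isCont_def filterlim_at_split)
    then show "((G \<circ> real_of_ereal) \<longlongrightarrow> G c) (at_right (ereal c))"
      by (simp add: ereal_tendsto_simps)
  qed (use G g in \<open>auto simp: has_real_derivative_iff_has_vector_derivative continuous_on_eq_continuous_at\<close>)
  finally have I_right: "(LBINT x=ereal c..\<infinity>. h x) = - G c" by simp
  have "(LINT x|lborel. h x) = (LBINT x=-\<infinity>..\<infinity>. h x)"
    by (simp add: interval_lebesgue_integral_def set_lebesgue_integral_def einterval_def)
  also have "\<dots> = (LBINT x=-\<infinity>..ereal c. h x) + (LBINT x=ereal c..\<infinity>. h x)"
    by (rule interval_integral_sum[symmetric])
       (use h_on[of "-\<infinity>" "\<infinity>"] in \<open>simp add: interval_lebesgue_integrable_def\<close>)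
  finally show ?thesis
    using I_left I_right by simp
qed

lemma le_at_point_by_deriv_sign:
  fixes u u' :: "real \<Rightarrow> real"
  assumes u: "\<And>t. (u has_real_derivative u' t) (at t)"
    and right: "\<And>t. c < t \<Longrightarrow> u' t \<le> 0" and left: "\<And>t. t < c \<Longrightarrow> 0 \<le> u' t"
  shows "u x \<le> u c"
proof (cases x c rule: linorder_cases)
  case less
  then obtain t where t: "x < t" "t < c" and mvt: "u c - u x = (c - x) * u' t"
    using MVT2[of x c u u'] u by blast
  have "0 \<le> (c - x) * u' t"
    using less t left[of t] by simp
  with mvt show ?thesis
    by simp
next
  case greater
  then obtain t where t: "c < t" "t < x" and mvt: "u x - u c = (x - c) * u' t"
    using MVT2[of c x u u'] u by blast
  have "(x - c) * u' t \<le> 0"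
    using greater t right[of t] by (simp add: mult_nonneg_nonpos)
  with mvt show ?thesis
    by simp
qed simp

abbreviation \<phi> :: "real \<Rightarrow> real" where "\<phi> \<equiv> std_normal_density"

lemma std_normal_density_le_one: "\<phi> x \<le> 1"
proof -
  have "exp (- x\<^sup>2 / 2) \<le> 1" and "1 \<le> sqrt (2 * pi)"
    using pi_gt3 by (simp_all add: real_sqrt_ge_1_iff)
  then have "exp (- x\<^sup>2 / 2) \<le> sqrt (2 * pi)"
    by linarith
  then show ?thesis
    by (simp add: std_normal_density_def)
qed

lemma std_normal_density_minus: "\<phi> (- x) = \<phi> x"
  by (simp add: std_normal_density_def)

lemma has_real_derivative_std_normal_density:
  "(\<phi> has_real_derivative - x * \<phi> x) (at x)"
  unfolding std_normal_density_def[abs_def] std_normal_density_def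
  by (rule derivative_eq_intros refl | simp)+

lemma integrable_std_normal_abs: "integrable lborel (\<lambda>z. \<phi> z * \<bar>z\<bar>)"
  using integrable_std_normal_moment_abs[of 1] by simp

lemma integral_std_normal_abs: "(LINT z|lborel. \<phi> z * \<bar>z\<bar>) = sqrt (2 / pi)"
  using integral_std_normal_moment_abs_odd[of 0] by simp

lemma exp_quadratic_eq_normal_density:
  assumes b: "0 < b"
  shows "exp (a * x - b / 2 * x\<^sup>2)
    = sqrt (2 * pi / b) * exp (a\<^sup>2 / (2 * b)) * normal_density (a / b) (1 / sqrt b) x"
proof -
  define D where "D = (x - a / b)\<^sup>2 / (2 * (1 / sqrt b)\<^sup>2)"
  have quadratic: "a * x - b / 2 * x\<^sup>2 = a\<^sup>2 / (2 * b) + - D"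
    using b by (simp add: D_def power_divide field_simps power2_eq_square)
  have "normal_density (a / b) (1 / sqrt b) x = exp (- D) / sqrt (2 * pi / b)"
    using b by (simp add: normal_density_def D_def power_divide)
  then show ?thesis
    unfolding quadratic exp_add using b by simp
qed

lemma
  assumes "0 < b"
  shows integrable_exp_quadratic: "integrable lborel (\<lambda>x. exp (a * x - b / 2 * x\<^sup>2))"
    and integral_exp_quadratic: "(LINT x|lborel. exp (a * x - b / 2 * x\<^sup>2)) = sqrt (2 * pi / b) * exp (a\<^sup>2 / (2 * b))"
  unfolding exp_quadratic_eq_normal_density[OF assms] using assms by simp_all

lemma set_integrable_exp_quadratic:
  fixes a b :: real
  assumes "0 < b" "A \<in> sets lborel"
  shows "set_integrable lborel A (\<lambda>x. exp (a * x - b / 2 * x\<^sup>2))"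
  unfolding set_integrable_def using assms by (intro integrable_mult_indicator integrable_exp_quadratic)

section \<open>The exponential loss and its Gaussian smoothing\<close>

lemma ell_exp_nonneg: "0 \<le> ell_exp t"
  by (simp add: ell_exp_def)

lemma ell_exp_le_one: "ell_exp t \<le> 1"
  by (simp add: ell_exp_def)

lemma borel_measurable_ell_exp [measurable]: "ell_exp \<in> borel_measurable borel"
  unfolding ell_exp_def[abs_def] by measurable

lemma ell_exp_lipschitz: "\<bar>ell_exp a - ell_exp b\<bar> \<le> \<bar>a - b\<bar>"
proof -
  have exp_diff_le: "exp (- u) - exp (- v) \<le> v - u" if "0 \<le> u" "u \<le> v" for u v :: real
  proof -
    have "exp (- u) - exp (- v) = exp (- u) * (1 - exp (- (v - u)))"
      by (simp add: algebra_simps flip: exp_add)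
    also have "\<dots> \<le> 1 * (v - u)"
    proof (rule mult_mono)
      show "1 - exp (- (v - u)) \<le> v - u"
        using exp_ge_add_one_self[of "- (v - u)"] by linarith
    qed (use that in auto)
    finally show ?thesis by simp
  qed
  have "\<bar>exp (- \<bar>a\<bar>) - exp (- \<bar>b\<bar>)\<bar> \<le> \<bar>\<bar>a\<bar> - \<bar>b\<bar>\<bar>"
    using exp_diff_le[of "\<bar>a\<bar>" "\<bar>b\<bar>"] exp_diff_le[of "\<bar>b\<bar>" "\<bar>a\<bar>"]
    by (cases "\<bar>a\<bar> \<le> \<bar>b\<bar>") (auto simp: abs_if)
  then show ?thesis
    using abs_triangle_ineq3[of a b] by (simp add: ell_exp_def)
qed

lemma has_real_derivative_ell_exp:
  assumes "t \<noteq> 0"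
  shows "(ell_exp has_real_derivative - sgn t * ell_exp t) (at t)"
proof (rule has_field_derivative_transform_within_open)
  show "((\<lambda>x. exp (- (sgn t * x))) has_real_derivative - sgn t * ell_exp t) (at t)"
    using assms by (auto intro!: derivative_eq_intros simp: ell_exp_def sgn_if)
  show "open {x. 0 < sgn t * x}"
    by (intro open_Collect_less continuous_intros)
  show "t \<in> {x. 0 < sgn t * x}"
    using assms by (simp add: sgn_if)
  show "exp (- (sgn t * x)) = ell_exp x" if "x \<in> {x. 0 < sgn t * x}" for x
    using that by (auto simp: ell_exp_def sgn_if split: if_splits)
qed

lemma integrable_g_smooth_integrand: "integrable lborel (\<lambda>z. \<phi> z * ell_exp (m + s * z))"
  by (rule integrable_mult_bounded[where C=1]) (auto simp: ell_exp_nonneg ell_exp_le_one)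

lemma g_smooth_nonneg: "0 \<le> g_smooth s m"
  unfolding g_smooth_def by (rule integral_nonneg_AE) (simp add: ell_exp_nonneg)

lemma g_smooth_le_one: "g_smooth s m \<le> 1"
proof -
  have "g_smooth s m \<le> (LINT z|lborel. \<phi> z)"
    unfolding g_smooth_def
    by (rule integral_mono) (auto simp: integrable_g_smooth_integrand ell_exp_le_one intro!: mult_left_le)
  then show ?thesis
    by simp
qed

lemma g_smooth_integrand_lipschitz:
  "\<bar>\<phi> z * ell_exp (m + s * z) - \<phi> z * ell_exp (m' + s' * z)\<bar> \<le> \<bar>m - m'\<bar> * \<phi> z + \<bar>s - s'\<bar> * (\<phi> z * \<bar>z\<bar>)"
proof -
  have "\<bar>\<phi> z * ell_exp (m + s * z) - \<phi> z * ell_exp (m' + s' * z)\<bar>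
      = \<phi> z * \<bar>ell_exp (m + s * z) - ell_exp (m' + s' * z)\<bar>"
    by (simp add: abs_mult flip: right_diff_distrib)
  also have "\<dots> \<le> \<phi> z * \<bar>(m - m') + (s - s') * z\<bar>"
    using ell_exp_lipschitz[of "m + s * z" "m' + s' * z"] by (intro mult_left_mono) (simp_all add: algebra_simps)
  also have "\<dots> \<le> \<phi> z * (\<bar>m - m'\<bar> + \<bar>s - s'\<bar> * \<bar>z\<bar>)"
    by (intro mult_left_mono) (simp_all add: abs_triangle_ineq[THEN order_trans] abs_mult)
  finally show ?thesis
    by (simp add: algebra_simps)
qed

lemma g_smooth_lipschitz:
  "\<bar>g_smooth s m - g_smooth s' m'\<bar> \<le> \<bar>m - m'\<bar> + \<bar>s - s'\<bar> * sqrt (2 / pi)"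
proof -
  have "\<bar>g_smooth s m - g_smooth s' m'\<bar>
      = \<bar>LINT z|lborel. \<phi> z * ell_exp (m + s * z) - \<phi> z * ell_exp (m' + s' * z)\<bar>"
    by (simp add: g_smooth_def integrable_g_smooth_integrand)
  also have "\<dots> \<le> (LINT z|lborel. \<bar>m - m'\<bar> * \<phi> z + \<bar>s - s'\<bar> * (\<phi> z * \<bar>z\<bar>))"
    by (rule integral_abs_bound_integral)
       (auto simp: integrable_g_smooth_integrand integrable_std_normal_abs g_smooth_integrand_lipschitz)
  also have "\<dots> = \<bar>m - m'\<bar> + \<bar>s - s'\<bar> * sqrt (2 / pi)"
    by (simp add: integrable_std_normal_abs integral_std_normal_abs)
  finally show ?thesis .
qed

lemma borel_measurable_g_smooth [measurable]: "g_smooth s \<in> borel_measurable borel"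
proof (rule borel_measurable_continuous_onI)
  have "lipschitz_on 1 UNIV (g_smooth s)"
    using g_smooth_lipschitz[of s _ s] by (intro lipschitz_onI) (simp_all add: dist_real_def)
  then show "continuous_on UNIV (g_smooth s)"
    by (rule lipschitz_on_continuous_on)
qed

text \<open>
  Since \<open>\<phi>' z = - z \<phi> z\<close> and \<open>ell_exp'' = ell_exp\<close> away from \<open>0\<close>, the integrand is the
  derivative of \<open>\<phi> z exp (m + s z)\<close> left of the kink \<open>z = - m / s\<close> and of
  \<open>- \<phi> z exp (- (m + s z))\<close> right of it; the boundary values at the kink add up to
  \<open>2 \<phi> (m / s)\<close> instead of cancelling.
\<close>

lemma stein_identity_ell_exp:
  assumes s: "0 < s"
  shows "(LINT z|lborel. \<phi> z * z * sgn (m + s * z) * ell_exp (m + s * z))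
    = 2 * \<phi> (m / s) - s * g_smooth s m"
proof -
  define c where "c = - m / s"
  have sign_left: "m + s * x < 0" if "x < c" for x
    using that s by (simp add: c_def field_simps)
  have sign_right: "0 < m + s * x" if "c < x" for x
    using that s by (simp add: c_def field_simps)
  have int_sgn: "integrable lborel (\<lambda>z. \<phi> z * z * (sgn (m + s * z) * ell_exp (m + s * z)))"
    by (rule integrable_mult_bounded[where C=1])
       (use integrable_std_normal_moment[of 1] in \<open>auto simp: abs_mult sgn_if ell_exp_le_one ell_exp_nonneg\<close>)
  have "(LINT z|lborel. \<phi> z * z * (sgn (m + s * z) * ell_exp (m + s * z)) + s * (\<phi> z * ell_exp (m + s * z)))
      = \<phi> c * exp (m + s * c) - - (\<phi> c * exp (- (m + s * c)))"
  proof (rule integral_by_one_sided_antiderivatives[where c=c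
        and F="\<lambda>z. \<phi> z * exp (m + s * z)" and f="\<lambda>z. (s - z) * \<phi> z * exp (m + s * z)"
        and G="\<lambda>z. - (\<phi> z * exp (- (m + s * z)))" and g="\<lambda>z. (s + z) * \<phi> z * exp (- (m + s * z))"])
    show "integrable lborel (\<lambda>z. \<phi> z * z * (sgn (m + s * z) * ell_exp (m + s * z)) + s * (\<phi> z * ell_exp (m + s * z)))"
      using int_sgn integrable_g_smooth_integrand by simp
    show "\<phi> x * x * (sgn (m + s * x) * ell_exp (m + s * x)) + s * (\<phi> x * ell_exp (m + s * x))
        = (s - x) * \<phi> x * exp (m + s * x)" if "x < c" for x
      using sign_left[OF that] by (simp add: ell_exp_def algebra_simps)
    show "\<phi> x * x * (sgn (m + s * x) * ell_exp (m + s * x)) + s * (\<phi> x * ell_exp (m + s * x))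
        = (s + x) * \<phi> x * exp (- (m + s * x))" if "c < x" for x
      using sign_right[OF that] by (simp add: ell_exp_def algebra_simps)
    show "((\<lambda>z. \<phi> z * exp (m + s * z)) has_real_derivative (s - x) * \<phi> x * exp (m + s * x)) (at x)" for x
      by (auto intro!: derivative_eq_intros has_real_derivative_std_normal_density simp: algebra_simps)
    show "((\<lambda>z. - (\<phi> z * exp (- (m + s * z)))) has_real_derivative (s + x) * \<phi> x * exp (- (m + s * x))) (at x)" for x
      by (auto intro!: derivative_eq_intros has_real_derivative_std_normal_density simp: algebra_simps)
    show "((\<lambda>z. \<phi> z * exp (m + s * z)) \<longlongrightarrow> 0) at_bot"
      using s unfolding std_normal_density_def by real_asymp
    show "((\<lambda>z. - (\<phi> z * exp (- (m + s * z)))) \<longlongrightarrow> 0) at_top"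
      using s unfolding std_normal_density_def by real_asymp
  qed (auto simp: std_normal_density_def intro!: continuous_intros)
  moreover have "m + s * c = 0" and "\<phi> c = \<phi> (m / s)"
    using s std_normal_density_minus[of "m / s"] by (simp_all add: c_def)
  ultimately show ?thesis
    using int_sgn integrable_g_smooth_integrand by (simp add: g_smooth_def mult.assoc)
qed

lemma g_smooth_has_derivative_sigma:
  assumes s: "0 < s"
  shows "((\<lambda>t. g_smooth t m) has_real_derivative s * g_smooth s m - 2 * \<phi> (m / s)) (at s)"
proof -
  have "((\<lambda>t. LINT z|lborel. \<phi> z * ell_exp (m + t * z)) has_real_derivative
      (LINT z|lborel. - (\<phi> z * z * sgn (m + s * z) * ell_exp (m + s * z)))) (at s)"
  proof (rule has_real_derivative_integral_lipschitz[where w="\<lambda>z. \<phi> z * \<bar>z\<bar>"])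
    show "AE z in lborel. ((\<lambda>t. \<phi> z * ell_exp (m + t * z)) has_real_derivative
        - (\<phi> z * z * sgn (m + s * z) * ell_exp (m + s * z))) (at s)"
      using AE_lborel_singleton[of "- m / s"]
    proof eventually_elim
      case (elim z)
      then have "m + s * z \<noteq> 0"
        using s by (auto simp: field_simps)
      then have "((\<lambda>t. ell_exp (m + t * z)) has_real_derivative
          - sgn (m + s * z) * ell_exp (m + s * z) * z) (at s)"
        by (intro DERIV_chain2[OF has_real_derivative_ell_exp]) (auto intro!: derivative_eq_intros)
      from DERIV_cmult[OF this, of "\<phi> z"] show ?case
        by (simp add: ac_simps)
    qed
    show "\<bar>\<phi> z * ell_exp (m + t * z) - \<phi> z * ell_exp (m + s * z)\<bar> \<le> \<bar>t - s\<bar> * (\<phi> z * \<bar>z\<bar>)" for t z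
      using g_smooth_integrand_lipschitz[of z m t m s] by simp
  qed (auto simp: integrable_g_smooth_integrand integrable_std_normal_abs)
  then show ?thesis
    using stein_identity_ell_exp[OF s, of m] by (simp add: g_smooth_def)
qed

lemma g_smooth_lower_bound:
  assumes "0 \<le> s" "s \<le> 1"
  shows "exp (-1) * exp (- \<bar>m\<bar>) \<le> g_smooth s m"
proof -
  define E where "E = exp (-1) * exp (- \<bar>m\<bar>)"
  \<comment> \<open>a polynomial minorant of \<open>exp (- \<bar>z\<bar>)\<close> whose Gaussian mean is \<open>exp (-1)\<close>\<close>
  have quadratic_le_exp: "exp (-1) * ((3 - z\<^sup>2) / 2) \<le> exp (- \<bar>z\<bar>)" for z :: real
  proof -
    have "0 \<le> (\<bar>z\<bar> - 1)\<^sup>2" by simp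
    then have "(3 - z\<^sup>2) / 2 \<le> 1 + (1 - \<bar>z\<bar>)"
      by (simp add: power2_diff field_simps)
    also have "\<dots> \<le> exp (1 - \<bar>z\<bar>)"
      by (rule exp_ge_add_one_self)
    finally have "exp (-1) * ((3 - z\<^sup>2) / 2) \<le> exp (-1) * exp (1 - \<bar>z\<bar>)"
      by (rule mult_left_mono) simp
    also have "\<dots> = exp (- \<bar>z\<bar>)"
      by (simp flip: exp_add)
    finally show ?thesis .
  qed
  have pointwise: "\<phi> z * (E * ((3 - z\<^sup>2) / 2)) \<le> \<phi> z * ell_exp (m + s * z)" for z
  proof (rule mult_left_mono)
    have "s * \<bar>z\<bar> \<le> \<bar>z\<bar>"
      using assms by (simp add: mult_left_le_one_le)
    then have "\<bar>m + s * z\<bar> \<le> \<bar>m\<bar> + \<bar>z\<bar>"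
      using assms abs_triangle_ineq[of m "s * z"] by (simp add: abs_mult)
    then have "exp (- \<bar>m\<bar>) * exp (- \<bar>z\<bar>) \<le> ell_exp (m + s * z)"
      by (simp add: ell_exp_def flip: exp_add)
    moreover have "E * ((3 - z\<^sup>2) / 2) \<le> exp (- \<bar>m\<bar>) * exp (- \<bar>z\<bar>)"
      using quadratic_le_exp[of z] by (simp add: E_def mult.assoc)
    ultimately show "E * ((3 - z\<^sup>2) / 2) \<le> ell_exp (m + s * z)"
      by linarith
  qed simp
  have int_sq: "integrable lborel (\<lambda>z. \<phi> z * z\<^sup>2)"
    using integrable_std_normal_moment[of 2] by simp
  have "E = (LINT z|lborel. 3 * E / 2 * \<phi> z - E / 2 * (\<phi> z * z\<^sup>2))"
    using int_sq integral_std_normal_moment_even[of 1] by simp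
  also have "\<dots> = (LINT z|lborel. \<phi> z * (E * ((3 - z\<^sup>2) / 2)))"
    by (simp add: field_simps)
  also have "\<dots> \<le> g_smooth s m"
    unfolding g_smooth_def
    by (rule integral_mono[OF _ integrable_g_smooth_integrand pointwise]) (use int_sq in \<open>simp add: field_simps\<close>)
  finally show ?thesis
    by (simp add: E_def)
qed

lemma L_sigma_has_derivative:
  assumes p: "integrable lborel p" and \<sigma>: "0 < \<sigma>"
  shows "(L_sigma p has_real_derivative
    \<sigma> * L_sigma p \<sigma> - 2 * (LINT m|lborel. p m * \<phi> (m / \<sigma>))) (at \<sigma>)"
proof -
  have [measurable]: "p \<in> borel_measurable lborel"
    using p by auto
  have int_pg: "integrable lborel (\<lambda>m. p m * g_smooth t m)" for t
    by (rule integrable_mult_bounded[OF p, where C=1]) (auto simp: g_smooth_nonneg g_smooth_le_one)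
  have int_p\<phi>: "integrable lborel (\<lambda>m. p m * \<phi> (m / \<sigma>))"
    by (rule integrable_mult_bounded[OF p, where C=1]) (auto simp: std_normal_density_le_one)
  have "((\<lambda>t. LINT m|lborel. p m * g_smooth t m) has_real_derivative
      (LINT m|lborel. p m * (\<sigma> * g_smooth \<sigma> m - 2 * \<phi> (m / \<sigma>)))) (at \<sigma>)"
  proof (rule has_real_derivative_integral_lipschitz[where w="\<lambda>m. \<bar>p m\<bar> * sqrt (2 / pi)"])
    show "AE m in lborel. ((\<lambda>t. p m * g_smooth t m) has_real_derivative
        p m * (\<sigma> * g_smooth \<sigma> m - 2 * \<phi> (m / \<sigma>))) (at \<sigma>)"
      by (intro AE_I2 DERIV_cmult g_smooth_has_derivative_sigma \<sigma>)
    show "\<bar>p m * g_smooth t m - p m * g_smooth \<sigma> m\<bar> \<le> \<bar>t - \<sigma>\<bar> * (\<bar>p m\<bar> * sqrt (2 / pi))" for t m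
      using g_smooth_lipschitz[of t m \<sigma> m]
      by (simp add: abs_mult mult_left_mono mult.left_commute flip: right_diff_distrib)
  qed (use p int_pg in auto)
  moreover have "(LINT m|lborel. p m * (\<sigma> * g_smooth \<sigma> m - 2 * \<phi> (m / \<sigma>)))
      = \<sigma> * L_sigma p \<sigma> - 2 * (LINT m|lborel. p m * \<phi> (m / \<sigma>))"
  proof -
    have "(LINT m|lborel. p m * (\<sigma> * g_smooth \<sigma> m - 2 * \<phi> (m / \<sigma>)))
        = (LINT m|lborel. \<sigma> * (p m * g_smooth \<sigma> m) - 2 * (p m * \<phi> (m / \<sigma>)))"
      by (simp add: algebra_simps)
    also have "\<dots> = \<sigma> * L_sigma p \<sigma> - 2 * (LINT m|lborel. p m * \<phi> (m / \<sigma>))"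
      using int_pg[of \<sigma>] int_p\<phi> by (simp add: L_sigma_def)
    finally show ?thesis .
  qed
  ultimately show ?thesis
    by (simp add: L_sigma_def[abs_def])
qed

section \<open>Gaussian envelopes of a log-concave density\<close>

lemma has_real_derivative_ln_score:
  assumes pos: "\<And>x. 0 < p x" and diff: "\<And>x. (\<lambda>t. ln (p t)) differentiable (at x)"
  shows "((\<lambda>t. ln (p t)) has_real_derivative score p x) (at x)"
proof -
  define D where "D = deriv (\<lambda>t. ln (p t)) x"
  have ln_p: "((\<lambda>t. ln (p t)) has_real_derivative D) (at x)"
    unfolding D_def using diff DERIV_deriv_iff_real_differentiable by blast
  have "((\<lambda>t. exp (ln (p t))) has_real_derivative exp (ln (p x)) * D) (at x)"
    by (rule DERIV_chain2[OF DERIV_exp ln_p])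
  then have "(p has_real_derivative p x * D) (at x)"
    using pos by simp
  then have "score p x = D"
    using pos[of x] by (simp add: score_def DERIV_imp_deriv)
  with ln_p show ?thesis
    by simp
qed

lemma density_le_gaussian_envelope:
  assumes pos: "\<And>x. 0 < p x" and diff: "\<And>x. (\<lambda>t. ln (p t)) differentiable (at x)"
    and concave: "\<And>x y. x < y \<Longrightarrow> score p y - score p x \<le> - \<nu> * (y - x)"
  shows "p y \<le> p x * exp (score p x * (y - x) - \<nu> / 2 * (y - x)\<^sup>2)"
proof -
  have "(\<lambda>t. ln (p t) + (\<nu> / 2 * (t - x)\<^sup>2 - score p x * (t - x))) y
      \<le> (\<lambda>t. ln (p t) + (\<nu> / 2 * (t - x)\<^sup>2 - score p x * (t - x))) x"
  proof (rule le_at_point_by_deriv_sign[where u="\<lambda>t. ln (p t) + (\<nu> / 2 * (t - x)\<^sup>2 - score p x * (t - x))"])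
    have "((\<lambda>t. \<nu> / 2 * (t - x)\<^sup>2 - score p x * (t - x)) has_real_derivative
        \<nu> * (t - x) - score p x) (at t)" for t
      by (auto intro!: derivative_eq_intros)
    from DERIV_add[OF has_real_derivative_ln_score[OF pos diff] this]
    show "((\<lambda>t. ln (p t) + (\<nu> / 2 * (t - x)\<^sup>2 - score p x * (t - x))) has_real_derivative
        score p t + (\<nu> * (t - x) - score p x)) (at t)" for t .
  qed (use concave[of x] concave[of _ x] in \<open>force simp: algebra_simps\<close>)+
  then have "exp (ln (p y)) \<le> exp (ln (p x) + (score p x * (y - x) - \<nu> / 2 * (y - x)\<^sup>2))"
    by simp
  then show ?thesis
    using pos by (simp add: exp_add)
qed

lemma density_ge_gaussian_envelope:
  assumes pos: "\<And>x. 0 < p x" and diff: "\<And>x. (\<lambda>t. ln (p t)) differentiable (at x)"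
    and smooth: "\<And>x y. x < y \<Longrightarrow> - \<rho> * (y - x) \<le> score p y - score p x"
  shows "p x * exp (score p x * (y - x) - \<rho> / 2 * (y - x)\<^sup>2) \<le> p y"
proof -
  have "(\<lambda>t. score p x * (t - x) - \<rho> / 2 * (t - x)\<^sup>2 - ln (p t)) y
      \<le> (\<lambda>t. score p x * (t - x) - \<rho> / 2 * (t - x)\<^sup>2 - ln (p t)) x"
  proof (rule le_at_point_by_deriv_sign[where u="\<lambda>t. score p x * (t - x) - \<rho> / 2 * (t - x)\<^sup>2 - ln (p t)"])
    have "((\<lambda>t. score p x * (t - x) - \<rho> / 2 * (t - x)\<^sup>2) has_real_derivative
        score p x - \<rho> * (t - x)) (at t)" for t
      by (auto intro!: derivative_eq_intros)
    from DERIV_diff[OF this has_real_derivative_ln_score[OF pos diff]]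
    show "((\<lambda>t. score p x * (t - x) - \<rho> / 2 * (t - x)\<^sup>2 - ln (p t)) has_real_derivative
        score p x - \<rho> * (t - x) - score p t) (at t)" for t .
  qed (use smooth[of x] smooth[of _ x] in \<open>force simp: algebra_simps\<close>)+
  then have "exp (ln (p x) + (score p x * (y - x) - \<rho> / 2 * (y - x)\<^sup>2)) \<le> exp (ln (p y))"
    by simp
  then show ?thesis
    using pos by (simp add: exp_add)
qed

section \<open>Bounds on the two terms of the derivative\<close>

lemma le_one_if_gamma_star_le_one:
  assumes "0 < \<sigma>" "\<sigma> \<le> 4 * sqrt 2 / sqrt pi" "gamma_star \<sigma> \<le> 1"
  shows "\<sigma> \<le> 1"
proof -
  have "1 \<le> 4 * sqrt 2 / (sqrt pi * \<sigma>)"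
    using assms by (simp add: field_simps)
  then have "\<sigma>\<^sup>2 \<le> gamma_star \<sigma>"
    using assms(1) by (simp add: gamma_star_def)
  then have "\<sigma>\<^sup>2 \<le> 1\<^sup>2"
    using assms(3) by simp
  then show ?thesis
    by (rule power2_le_imp_le) simp
qed

lemma L_sigma_lower_bound:
  assumes pos: "\<And>x. 0 < p x" and diff: "\<And>x. (\<lambda>t. ln (p t)) differentiable (at x)"
    and smooth: "\<And>x y. x < y \<Longrightarrow> - \<rho> * (y - x) \<le> score p y - score p x"
    and p: "integrable lborel p" and \<rho>: "0 < \<rho>" and \<sigma>: "0 \<le> \<sigma>" "\<sigma> \<le> 1"
    and c: "c \<le> \<bar>score p 0\<bar> - 1"
  shows "p 0 * exp (-1) * (LINT \<delta>:{0..}|lborel. exp (c * \<delta> - \<rho> / 2 * \<delta>\<^sup>2)) \<le> L_sigma p \<sigma>"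
proof -
  \<comment> \<open>reflect \<open>\<mu>\<close> so that \<open>score p 0 * \<mu> \<ge> 0\<close> on the half-line of integration\<close>
  define e :: real where "e = (if 0 \<le> score p 0 then 1 else -1)"
  have e: "e \<noteq> 0" "\<bar>e\<bar> = 1" "e * score p 0 = \<bar>score p 0\<bar>" "(e * \<delta>)\<^sup>2 = \<delta>\<^sup>2" for \<delta>
    by (simp_all add: e_def)
  define F where "F m = p m * g_smooth \<sigma> m" for m
  define G where "G \<delta> = p 0 * exp (-1) * exp (c * \<delta> - \<rho> / 2 * \<delta>\<^sup>2)" for \<delta>
  have [measurable]: "p \<in> borel_measurable lborel"
    using p by auto
  have int_F: "integrable lborel F"
    unfolding F_def by (rule integrable_mult_bounded[OF p, where C=1]) (auto simp: g_smooth_nonneg g_smooth_le_one)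
  have L_eq: "L_sigma p \<sigma> = (LINT \<delta>|lborel. F (e * \<delta>))"
    using lborel_integral_real_affine[OF e(1), of F 0] e(2) by (simp add: L_sigma_def F_def[abs_def])
  have "indicator {0..} \<delta> * G \<delta> \<le> F (e * \<delta>)" for \<delta>
  proof (cases "0 \<le> \<delta>")
    case True
    have "p 0 * exp (\<bar>score p 0\<bar> * \<delta> - \<rho> / 2 * \<delta>\<^sup>2) \<le> p (e * \<delta>)"
      using density_ge_gaussian_envelope[OF pos diff smooth, where x=0 and y="e * \<delta>"] e(3,4)
      by (simp add: mult.assoc[symmetric] mult.commute[of _ e])
    moreover have "exp (-1) * exp (- \<delta>) \<le> g_smooth \<sigma> (e * \<delta>)"
      using g_smooth_lower_bound[OF \<sigma>, of "e * \<delta>"] True e(2) by (simp add: abs_mult)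
    ultimately have F_ge: "p 0 * exp (\<bar>score p 0\<bar> * \<delta> - \<rho> / 2 * \<delta>\<^sup>2) * (exp (-1) * exp (- \<delta>)) \<le> F (e * \<delta>)"
      unfolding F_def using pos[of "e * \<delta>"] by (intro mult_mono) auto
    have "G \<delta> \<le> p 0 * exp (-1) * exp ((\<bar>score p 0\<bar> - 1) * \<delta> - \<rho> / 2 * \<delta>\<^sup>2)"
      unfolding G_def using c True pos[of 0] by (intro mult_left_mono) (simp_all add: mult_right_mono)
    also have "\<dots> = p 0 * exp (\<bar>score p 0\<bar> * \<delta> - \<rho> / 2 * \<delta>\<^sup>2) * (exp (-1) * exp (- \<delta>))"
      by (simp add: algebra_simps flip: exp_add)
    finally show ?thesis
      using True F_ge by simp
  qed (simp add: F_def g_smooth_nonneg less_imp_le[OF pos])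
  moreover have "integrable lborel (\<lambda>\<delta>. indicator {0..} \<delta> * G \<delta>)"
    using set_integrable_exp_quadratic[OF \<rho>, of "{0..}" c]
    unfolding set_integrable_def G_def by (auto simp: ac_simps intro: integrable_mult_right)
  ultimately have "(LINT \<delta>|lborel. indicator {0..} \<delta> * G \<delta>) \<le> (LINT \<delta>|lborel. F (e * \<delta>))"
    using lborel_integrable_real_affine[OF int_F e(1), of 0] by (intro integral_mono) auto
  then show ?thesis
    by (simp add: L_eq G_def set_lebesgue_integral_def mult.left_commute[of "indicator _ _ :: real"])
qed

lemma integral_density_mult_std_normal_le:
  assumes pos: "\<And>x. 0 < p x" and diff: "\<And>x. (\<lambda>t. ln (p t)) differentiable (at x)"
    and concave: "\<And>x y. x < y \<Longrightarrow> score p y - score p x \<le> - \<nu> * (y - x)"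
    and p: "integrable lborel p" and \<nu>: "0 \<le> \<nu>" and \<sigma>: "0 < \<sigma>"
  shows "(LINT m|lborel. p m * \<phi> (m / \<sigma>))
    \<le> p 0 * exp ((score p 0)\<^sup>2 / (2 * (\<nu> + 1 / \<sigma>\<^sup>2))) / sqrt (\<nu> + 1 / \<sigma>\<^sup>2)"
proof -
  define a where "a = \<nu> + 1 / \<sigma>\<^sup>2"
  have a: "0 < a"
    using \<nu> \<sigma> by (simp add: a_def add_nonneg_pos)
  have [measurable]: "p \<in> borel_measurable lborel"
    using p by auto
  have "(LINT m|lborel. p m * \<phi> (m / \<sigma>))
      \<le> (LINT m|lborel. p 0 / sqrt (2 * pi) * exp (score p 0 * m - a / 2 * m\<^sup>2))"
  proof (rule integral_mono)
    show "integrable lborel (\<lambda>m. p m * \<phi> (m / \<sigma>))"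
      by (rule integrable_mult_bounded[OF p, where C=1]) (auto simp: std_normal_density_le_one)
    show "p m * \<phi> (m / \<sigma>) \<le> p 0 / sqrt (2 * pi) * exp (score p 0 * m - a / 2 * m\<^sup>2)" for m
    proof -
      have "p m * \<phi> (m / \<sigma>) \<le> p 0 * exp (score p 0 * m - \<nu> / 2 * m\<^sup>2) * \<phi> (m / \<sigma>)"
        using density_le_gaussian_envelope[OF pos diff concave, where x=0 and y=m] by (simp add: mult_right_mono)
      also have "\<dots> = p 0 / sqrt (2 * pi) * exp (score p 0 * m - a / 2 * m\<^sup>2)"
        using \<sigma> by (simp add: std_normal_density_def a_def field_simps power2_eq_square flip: exp_add)
      finally show ?thesis .
    qed
  qed (use a integrable_exp_quadratic in simp)
  also have "\<dots> = p 0 * exp ((score p 0)\<^sup>2 / (2 * a)) / sqrt a"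
    unfolding integral_mult_right_zero integral_exp_quadratic[OF a]
    using a by (simp add: real_sqrt_divide field_simps)
  finally show ?thesis
    by (simp add: a_def)
qed

theorem lemma9:
  fixes p :: "real \<Rightarrow> real" and \<nu> \<rho> \<sigma> :: real
  assumes p_pos: "\<And>x. p x > 0"
    and p_int: "integrable lborel p"
    and p_norm: "(LINT x|lborel. p x) = 1"
    and logp_diff: "\<And>x. (\<lambda>t. ln (p t)) differentiable (at x)"
    and nu_pos: "0 < \<nu>" and nu_le_rho: "\<nu> \<le> \<rho>"
    and logconc: "\<And>x y. x < y \<Longrightarrow>
        - \<rho> * (y - x) \<le> score p y - score p x \<and> score p y - score p x \<le> - \<nu> * (y - x)"
    and sigma_pos: "0 < \<sigma>"
    and sigma_le: "\<sigma> \<le> 4 * sqrt 2 / sqrt pi"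
    and gamma_le: "gamma_star \<sigma> \<le> min 1 (1 / (4 * sqrt \<rho>))"
  shows "L_sigma p differentiable (at \<sigma>) \<and>
    deriv (L_sigma p) \<sigma> \<ge>
      p 0 * (\<sigma> / 11 * (LINT \<delta>:{0..}|lborel.
                 exp ((\<bar>score p 0\<bar> - sqrt \<rho> / 4 - 1) * \<delta> - \<rho> / 2 * \<delta>\<^sup>2))
             - 2 * sqrt 2 * exp ((score p 0)\<^sup>2 / (\<nu> + 1 / \<sigma>\<^sup>2)) * (1 / sqrt (\<nu> + 1 / \<sigma>\<^sup>2)))"
proof -
  have \<rho>: "0 < \<rho>"
    using nu_pos nu_le_rho by linarith
  have \<sigma>_le_1: "\<sigma> \<le> 1"
    using le_one_if_gamma_star_le_one sigma_pos sigma_le gamma_le by simp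
  define S where "S = score p 0"
  define a where "a = \<nu> + 1 / \<sigma>\<^sup>2"
  define T where "T = (LINT \<delta>:{0..}|lborel. exp ((\<bar>S\<bar> - sqrt \<rho> / 4 - 1) * \<delta> - \<rho> / 2 * \<delta>\<^sup>2))"
  define Q where "Q = (LINT m|lborel. p m * \<phi> (m / \<sigma>))"
  have L_deriv: "(L_sigma p has_real_derivative \<sigma> * L_sigma p \<sigma> - 2 * Q) (at \<sigma>)"
    unfolding Q_def by (rule L_sigma_has_derivative[OF p_int sigma_pos])
  have "p 0 / 11 * T \<le> p 0 * exp (-1) * T"
    using exp_le p_pos[of 0] unfolding T_def set_lebesgue_integral_def
    by (intro mult_right_mono integral_nonneg_AE) (simp_all add: exp_minus field_simps)
  also have "\<dots> \<le> L_sigma p \<sigma>"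
    unfolding T_def S_def using logconc sigma_pos \<sigma>_le_1 \<rho>
    by (intro L_sigma_lower_bound[OF p_pos logp_diff _ p_int \<rho>]) auto
  finally have L_bound: "\<sigma> * (p 0 / 11 * T) \<le> \<sigma> * L_sigma p \<sigma>"
    using sigma_pos by simp
  have a: "0 < a"
    using nu_pos sigma_pos by (simp add: a_def add_pos_pos)
  have "Q \<le> p 0 * exp (S\<^sup>2 / (2 * a)) / sqrt a"
    unfolding Q_def S_def a_def using logconc nu_pos sigma_pos
    by (intro integral_density_mult_std_normal_le[OF p_pos logp_diff _ p_int]) auto
  also have "\<dots> \<le> p 0 * (sqrt 2 * exp (S\<^sup>2 / a)) / sqrt a"
  proof -
    have "exp (S\<^sup>2 / (2 * a)) \<le> exp (S\<^sup>2 / a)"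
      using a by (simp add: frac_le)
    also have "\<dots> \<le> sqrt 2 * exp (S\<^sup>2 / a)"
      by simp
    finally show ?thesis
      using a p_pos[of 0] by (intro divide_right_mono mult_left_mono) simp_all
  qed
  finally have "p 0 * (\<sigma> / 11 * T - 2 * sqrt 2 * exp (S\<^sup>2 / a) * (1 / sqrt a)) \<le> \<sigma> * L_sigma p \<sigma> - 2 * Q"
    using L_bound by (simp add: algebra_simps)
  moreover have "deriv (L_sigma p) \<sigma> = \<sigma> * L_sigma p \<sigma> - 2 * Q"
    using L_deriv by (rule DERIV_imp_deriv)
  moreover have "L_sigma p differentiable (at \<sigma>)"
    using L_deriv real_differentiable_def by blast
  ultimately show ?thesis
    by (simp add: S_def a_def T_def)
qed

end
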